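(* Let $(A,\mu,\alpha,\beta)$ be a BiHom-associative algebra and let $r=\sum_i x_i\otimes y_i\in A\otimes A$ be such that $(\alpha\otimes\alpha)(r)=r=(\beta\otimes\beta)(r)$. Define $\Delta_r:A\rightarrow A\otimes A$ by $\Delta_r(a)=\sum_i\alpha(x_i)\otimes y_i\cdot a-\sum_i a\cdot x_i\otimes\beta(y_i)$. Then $(\Delta_r\otimes\beta)\circ\Delta_r=(\alpha\otimes\Delta_r)\circ\Delta_r$ if and only if $a\bullet A(r)=A(r)\bullet a$ for all $a\in A$, where the actions of $A$ on $A\otimes A\otimes A$ are $a\bullet(x\otimes y\otimes z)=\alpha(a)\cdot x\otimes\beta(y)\otimes\beta(z)$ and $(x\otimes y\otimes z)\bullet a=\alpha(x)\otimes\alpha(y)\otimes z\cdot\beta(a)$, and $A(r)=r_{13}r_{12}-r_{12}r_{23}+r_{23}r_{13}$ with $r_{12}r_{23}=\sum_{i,j}\alpha(x_i)\otimes y_i\cdot x_j\otimes\beta(y_j)$, $r_{13}r_{12}=\sum_{i,j}x_i\cdot x_j\otimes\beta(y_j)\otimes\beta(y_i)$, $r_{23}r_{13}=\sum_{i,j}\alpha(x_i)\otimes\alpha(x_j)\otimes y_j\cdot y_i$.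
   Context: A BiHom-associative algebra is a 4-tuple $(A,\mu,\alpha,\beta)$ with $A$ a linear space, $\alpha,\beta:A\to A$ and $\mu:A\otimes A\to A$ (written $\mu(x\otimes y)=x\cdot y$) linear maps such that $\alpha\circ\beta=\beta\circ\alpha$, $\alpha(x\cdot y)=\alpha(x)\cdot\alpha(y)$, $\beta(x\cdot y)=\beta(x)\cdot\beta(y)$ and $\alpha(x)\cdot(y\cdot z)=(x\cdot y)\cdot\beta(z)$ for all $x,y,z\in A$. Work is over a base field $\Bbbk$, and $\otimes=\otimes_{\Bbbk}$. *)

theory Defs
  imports Main "HOL.Vector_Spaces" "HOL-Library.Function_Algebras"
begin

text \<open>Tensor products over a field 'k of a 'k-vector space (type 'a with scalar
multiplication smul) are modelled as the free 'k-vector space on tuples, modulo the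
subspace spanned by the multilinearity relations.  A tensor is represented by a
finite formal sum, i.e. a list of (coefficient, tuple) pairs.\<close>

definition fsum :: "('k::comm_ring_1 \<times> 'b) list \<Rightarrow> ('b \<Rightarrow> 'k)" where
  "fsum xs = (\<lambda>p. sum_list (map (\<lambda>(c,q). if q = p then c else 0) xs))"

definition fscale :: "'k::comm_ring_1 \<Rightarrow> ('b \<Rightarrow> 'k) \<Rightarrow> ('b \<Rightarrow> 'k)" where
  "fscale c f = (\<lambda>p. c * f p)"

definition rel2 :: "('k::field \<Rightarrow> 'a::ab_group_add \<Rightarrow> 'a) \<Rightarrow> (('a \<times> 'a) \<Rightarrow> 'k) set" where
  "rel2 s =
     {fsum [(1,(x+x',y)),(-1,(x,y)),(-1,(x',y))] | x x' y. True}
   \<union> {fsum [(1,(x,y+y')),(-1,(x,y)),(-1,(x,y'))] | x y y'. True}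
   \<union> {fsum [(1,(s c x,y)),(-c,(x,y))] | c x y. True}
   \<union> {fsum [(1,(x,s c y)),(-c,(x,y))] | c x y. True}"

definition rel3 :: "('k::field \<Rightarrow> 'a::ab_group_add \<Rightarrow> 'a) \<Rightarrow> (('a \<times> 'a \<times> 'a) \<Rightarrow> 'k) set" where
  "rel3 s =
     {fsum [(1,(x+x',y,z)),(-1,(x,y,z)),(-1,(x',y,z))] | x x' y z. True}
   \<union> {fsum [(1,(x,y+y',z)),(-1,(x,y,z)),(-1,(x,y',z))] | x y y' z. True}
   \<union> {fsum [(1,(x,y,z+z')),(-1,(x,y,z)),(-1,(x,y,z'))] | x y z z'. True}
   \<union> {fsum [(1,(s c x,y,z)),(-c,(x,y,z))] | c x y z. True}
   \<union> {fsum [(1,(x,s c y,z)),(-c,(x,y,z))] | c x y z. True}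
   \<union> {fsum [(1,(x,y,s c z)),(-c,(x,y,z))] | c x y z. True}"

definition tens2_eq :: "('k::field \<Rightarrow> 'a::ab_group_add \<Rightarrow> 'a) \<Rightarrow> ('k \<times> 'a \<times> 'a) list \<Rightarrow> ('k \<times> 'a \<times> 'a) list \<Rightarrow> bool" where
  "tens2_eq s u v \<longleftrightarrow> fsum u - fsum v \<in> module.span fscale (rel2 s)"

definition tens3_eq :: "('k::field \<Rightarrow> 'a::ab_group_add \<Rightarrow> 'a) \<Rightarrow> ('k \<times> 'a \<times> 'a \<times> 'a) list \<Rightarrow> ('k \<times> 'a \<times> 'a \<times> 'a) list \<Rightarrow> bool" where
  "tens3_eq s u v \<longleftrightarrow> fsum u - fsum v \<in> module.span fscale (rel3 s)"

definition bihom_assoc :: "('k::field \<Rightarrow> 'a::ab_group_add \<Rightarrow> 'a) \<Rightarrow> ('a \<Rightarrow> 'a \<Rightarrow> 'a) \<Rightarrow> ('a \<Rightarrow> 'a) \<Rightarrow> ('a \<Rightarrow> 'a) \<Rightarrow> bool" where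
  "bihom_assoc s mu \<alpha> \<beta> \<longleftrightarrow>
     vector_space s \<and>
     (\<forall>x. Vector_Spaces.linear s s (mu x)) \<and> (\<forall>y. Vector_Spaces.linear s s (\<lambda>x. mu x y)) \<and>
     Vector_Spaces.linear s s \<alpha> \<and> Vector_Spaces.linear s s \<beta> \<and>
     \<alpha> \<circ> \<beta> = \<beta> \<circ> \<alpha> \<and>
     (\<forall>x y. \<alpha> (mu x y) = mu (\<alpha> x) (\<alpha> y)) \<and>
     (\<forall>x y. \<beta> (mu x y) = mu (\<beta> x) (\<beta> y)) \<and>
     (\<forall>x y z. mu (\<alpha> x) (mu y z) = mu (mu x y) (\<beta> z))"

text \<open>r = \<Sum>_i x_i \<otimes> y_i is given by the list of pairs (x_i, y_i).\<close>
definition tens_of :: "('a \<times> 'a) list \<Rightarrow> ('k::field \<times> 'a \<times> 'a) list" where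
  "tens_of r = map (\<lambda>(x,y). (1,(x,y))) r"

definition Delta_r :: "('a \<Rightarrow> 'a \<Rightarrow> 'a) \<Rightarrow> ('a \<Rightarrow> 'a) \<Rightarrow> ('a \<Rightarrow> 'a) \<Rightarrow> ('a \<times> 'a) list \<Rightarrow> 'a \<Rightarrow> ('k::field \<times> 'a \<times> 'a) list" where
  "Delta_r mu \<alpha> \<beta> r a =
     map (\<lambda>(x,y). (1, (\<alpha> x, mu y a))) r @ map (\<lambda>(x,y). (-1, (mu a x, \<beta> y))) r"

definition Delta_beta :: "('a \<Rightarrow> 'a \<Rightarrow> 'a) \<Rightarrow> ('a \<Rightarrow> 'a) \<Rightarrow> ('a \<Rightarrow> 'a) \<Rightarrow> ('a \<times> 'a) list \<Rightarrow> 'a \<Rightarrow> ('k::field \<times> 'a \<times> 'a \<times> 'a) list" where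
  "Delta_beta mu \<alpha> \<beta> r a =
     concat (map (\<lambda>(c,(u,v)). map (\<lambda>(d,(p,q)). (c*d, (p, q, \<beta> v))) (Delta_r mu \<alpha> \<beta> r u))
                 (Delta_r mu \<alpha> \<beta> r a))"

definition alpha_Delta :: "('a \<Rightarrow> 'a \<Rightarrow> 'a) \<Rightarrow> ('a \<Rightarrow> 'a) \<Rightarrow> ('a \<Rightarrow> 'a) \<Rightarrow> ('a \<times> 'a) list \<Rightarrow> 'a \<Rightarrow> ('k::field \<times> 'a \<times> 'a \<times> 'a) list" where
  "alpha_Delta mu \<alpha> \<beta> r a =
     concat (map (\<lambda>(c,(u,v)). map (\<lambda>(d,(p,q)). (c*d, (\<alpha> u, p, q))) (Delta_r mu \<alpha> \<beta> r v))
                 (Delta_r mu \<alpha> \<beta> r a))"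

definition AYBE :: "('a \<Rightarrow> 'a \<Rightarrow> 'a) \<Rightarrow> ('a \<Rightarrow> 'a) \<Rightarrow> ('a \<Rightarrow> 'a) \<Rightarrow> ('a \<times> 'a) list \<Rightarrow> ('k::field \<times> 'a \<times> 'a \<times> 'a) list" where
  "AYBE mu \<alpha> \<beta> r =
     concat (map (\<lambda>(xi,yi). map (\<lambda>(xj,yj). (1, (mu xi xj, \<beta> yj, \<beta> yi))) r) r)
   @ concat (map (\<lambda>(xi,yi). map (\<lambda>(xj,yj). (-1, (\<alpha> xi, mu yi xj, \<beta> yj))) r) r)
   @ concat (map (\<lambda>(xi,yi). map (\<lambda>(xj,yj). (1, (\<alpha> xi, \<alpha> xj, mu yj yi))) r) r)"

definition lact :: "('a \<Rightarrow> 'a \<Rightarrow> 'a) \<Rightarrow> ('a \<Rightarrow> 'a) \<Rightarrow> ('a \<Rightarrow> 'a) \<Rightarrow> 'a \<Rightarrow> ('k \<times> 'a \<times> 'a \<times> 'a) list \<Rightarrow> ('k \<times> 'a \<times> 'a \<times> 'a) list" where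
  "lact mu \<alpha> \<beta> a t = map (\<lambda>(c,(x,y,z)). (c, (mu (\<alpha> a) x, \<beta> y, \<beta> z))) t"

definition ract :: "('a \<Rightarrow> 'a \<Rightarrow> 'a) \<Rightarrow> ('a \<Rightarrow> 'a) \<Rightarrow> ('a \<Rightarrow> 'a) \<Rightarrow> ('k \<times> 'a \<times> 'a \<times> 'a) list \<Rightarrow> 'a \<Rightarrow> ('k \<times> 'a \<times> 'a \<times> 'a) list" where
  "ract mu \<alpha> \<beta> t a = map (\<lambda>(c,(x,y,z)). (c, (\<alpha> x, \<alpha> y, mu z (\<beta> a)))) t"

end

theory Submission
  imports Defs
begin

text \<open>Expanding \<open>\<Delta>\<^sub>r\<close> twice writes both \<open>(\<Delta>\<^sub>r \<otimes> \<beta>)\<Delta>\<^sub>r(a) - (\<alpha> \<otimes> \<Delta>\<^sub>r)\<Delta>\<^sub>r(a)\<close>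
  and \<open>a \<bullet> A(r) - A(r) \<bullet> a\<close> as signed double sums over the legs of \<open>r\<close>. The two
  expressions are equal in \<open>A \<otimes> A \<otimes> A\<close> for every \<open>a\<close>: their terms match in pairs,
  after using BiHom-associativity and the multiplicativity of \<open>\<alpha>, \<beta>\<close> inside a term
  and replacing one copy of \<open>r\<close> by \<open>(\<alpha> \<otimes> \<alpha>)(r)\<close> or \<open>(\<beta> \<otimes> \<beta>)(r)\<close>. The latter
  step is legitimate because each term depends bilinearly on the leg being replaced, so
  it descends from formal sums to the tensor product. Hence one side vanishes for all
  \<open>a\<close> iff the other does.\<close>

lemma fsum_Nil [simp]: "fsum [] = 0"
  by (simp add: fsum_def fun_eq_iff)

lemma fsum_Cons: "fsum ((c,p) # xs) = (\<lambda>q. if p = q then c else 0) + fsum xs"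
  by (simp add: fsum_def fun_eq_iff)

lemma fsum_append [simp]: "fsum (xs @ ys) = fsum xs + fsum ys"
  by (simp add: fsum_def fun_eq_iff)

lemma fsum_concat: "fsum (concat xss) = sum_list (map fsum xss)"
  by (induction xss) auto

lemma fsum_map_uminus: "fsum (map (\<lambda>x. (- c x, g x)) xs) = - fsum (map (\<lambda>x. (c x, g x)) xs)"
  by (induction xs) (auto simp: fsum_Cons fun_eq_iff)

lemma module_fscale: "module (fscale :: 'k::comm_ring_1 \<Rightarrow> ('b \<Rightarrow> 'k) \<Rightarrow> _)"
  by unfold_locales (auto simp: fscale_def fun_eq_iff algebra_simps)

lemmas span_fscale_zero = module.span_zero[OF module_fscale]
lemmas span_fscale_base = module.span_base[OF module_fscale]
lemmas span_fscale_add = module.span_add[OF module_fscale]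
lemmas span_fscale_diff = module.span_diff[OF module_fscale]
lemmas span_fscale_neg = module.span_neg[OF module_fscale]
lemmas span_fscale_scale = module.span_scale[OF module_fscale]
lemmas span_fscale_induct = module.span_induct_alt[OF module_fscale, consumes 1, case_names base step]

lemma span_fscale_diff_mem_iff:
  assumes "x - y \<in> module.span fscale S"
  shows "x \<in> module.span fscale S \<longleftrightarrow> y \<in> module.span fscale S"
proof
  assume "x \<in> module.span fscale S"
  from span_fscale_diff[OF this assms] show "y \<in> module.span fscale S"
    by simp
next
  assume "y \<in> module.span fscale S"
  from span_fscale_add[OF assms this] show "x \<in> module.span fscale S"
    by simp
qed

abbreviation span_rel2 :: "('k::field \<Rightarrow> 'a::ab_group_add \<Rightarrow> 'a) \<Rightarrow> ('a \<times> 'a \<Rightarrow> 'k) set" where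
  "span_rel2 s \<equiv> module.span fscale (rel2 s)"

abbreviation span_rel3 :: "('k::field \<Rightarrow> 'a::ab_group_add \<Rightarrow> 'a) \<Rightarrow> ('a \<times> 'a \<times> 'a \<Rightarrow> 'k) set" where
  "span_rel3 s \<equiv> module.span fscale (rel3 s)"

definition fmap :: "('b \<Rightarrow> 'c) \<Rightarrow> ('k \<times> 'b) list \<Rightarrow> ('k \<times> 'c) list" where
  "fmap t u = map (\<lambda>(c,p). (c, t p)) u"

lemma fmap_append [simp]: "fmap t (u @ v) = fmap t u @ fmap t v"
  by (simp add: fmap_def)

lemma fsum_fmap:
  fixes w :: "('k::comm_ring_1 \<times> 'b) list"
  assumes "finite P" "snd ` set w \<subseteq> P"
  shows "fsum (fmap t w) q = (\<Sum>p\<in>{p\<in>P. t p = q}. fsum w p)"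
  using assms(2)
proof (induction w)
  case Nil
  then show ?case by (simp add: fmap_def fsum_def)
next
  case (Cons cp w)
  obtain c p0 where cp: "cp = (c,p0)" by fastforce
  let ?S = "{p\<in>P. t p = q}"
  have "finite ?S" using assms(1) by simp
  have "p0 \<in> P" using Cons.prems cp by auto
  have "(\<Sum>p\<in>?S. fsum (cp # w) p) = (\<Sum>p\<in>?S. if p0 = p then c else 0) + (\<Sum>p\<in>?S. fsum w p)"
    by (simp add: cp fsum_Cons sum.distrib)
  also have "(\<Sum>p\<in>?S. if p0 = p then c else 0) = (if t p0 = q then c else 0)"
    using \<open>finite ?S\<close> \<open>p0 \<in> P\<close> by simp
  also have "(\<Sum>p\<in>?S. fsum w p) = fsum (fmap t w) q"
    using Cons by auto
  finally show ?case
    by (simp add: cp fmap_def fsum_Cons)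
qed

lemma fsum_fmap_cong:
  fixes w w' :: "('k::comm_ring_1 \<times> 'b) list"
  assumes "fsum w = fsum w'"
  shows "fsum (fmap t w) = fsum (fmap t w')"
proof
  fix q
  let ?P = "snd ` set w \<union> snd ` set w'"
  show "fsum (fmap t w) q = fsum (fmap t w') q"
    using fsum_fmap[of ?P w t q] fsum_fmap[of ?P w' t q] assms by simp
qed

definition fscale_list :: "'k::comm_ring_1 \<Rightarrow> ('k \<times> 'b) list \<Rightarrow> ('k \<times> 'b) list" where
  "fscale_list c u = map (\<lambda>(d,p). (c * d, p)) u"

lemma fsum_fscale_list [simp]: "fsum (fscale_list c u) = fscale c (fsum u)"
  by (induction u) (auto simp: fscale_list_def fsum_Cons fscale_def fun_eq_iff algebra_simps)

lemma fmap_fscale_list [simp]: "fmap t (fscale_list c u) = fscale_list c (fmap t u)"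
  by (simp add: fscale_list_def fmap_def split_def)

definition tens3_bilinear :: "('k::field \<Rightarrow> 'a::ab_group_add \<Rightarrow> 'a) \<Rightarrow> ('a \<Rightarrow> 'a \<Rightarrow> 'a \<times> 'a \<times> 'a) \<Rightarrow> bool" where
  "tens3_bilinear s t \<longleftrightarrow>
    (\<forall>x x' y. fsum [(1::'k, t (x + x') y), (-1, t x y), (-1, t x' y)] \<in> span_rel3 s)
  \<and> (\<forall>x y y'. fsum [(1::'k, t x (y + y')), (-1, t x y), (-1, t x y')] \<in> span_rel3 s)
  \<and> (\<forall>c x y. fsum [(1::'k, t (s c x) y), (-c, t x y)] \<in> span_rel3 s)
  \<and> (\<forall>c x y. fsum [(1::'k, t x (s c y)), (-c, t x y)] \<in> span_rel3 s)"

lemma span_rel2_lift: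
  assumes "x \<in> span_rel2 s" and "tens3_bilinear s t"
  shows "\<exists>L. fsum L = x \<and> fsum (fmap (case_prod t) L) \<in> span_rel3 s"
  using assms(1)
proof (induction rule: span_fscale_induct)
  case base
  show ?case
    by (rule exI[of _ "[]"]) (simp add: fmap_def span_fscale_zero flip: zero_fun_def)
next
  case (step c g y)
  from step.IH obtain L where L: "fsum L = y" "fsum (fmap (case_prod t) L) \<in> span_rel3 s"
    by blast
  from step.hyps obtain l where l: "fsum l = g" "fsum (fmap (case_prod t) l) \<in> span_rel3 s"
    using assms(2) unfolding rel2_def tens3_bilinear_def by (auto simp: fmap_def)
  have "fsum (fmap (case_prod t) (fscale_list c l @ L))
      = fscale c (fsum (fmap (case_prod t) l)) + fsum (fmap (case_prod t) L)"
    by simp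
  also have "\<dots> \<in> span_rel3 s"
    using L l by (intro span_fscale_add span_fscale_scale)
  finally have "fsum (fmap (case_prod t) (fscale_list c l @ L)) \<in> span_rel3 s" .
  moreover have "fsum (fscale_list c l @ L) = fscale c g + y"
    using L l by simp
  ultimately show ?case
    by blast
qed

lemma tens2_eq_fmap:
  assumes "tens2_eq s u v" and "tens3_bilinear s t"
  shows "fsum (fmap (case_prod t) u) - fsum (fmap (case_prod t) v) \<in> span_rel3 s"
proof -
  obtain L where L: "fsum L = fsum u - fsum v" "fsum (fmap (case_prod t) L) \<in> span_rel3 s"
    using span_rel2_lift assms unfolding tens2_eq_def by blast
  have "fsum u = fsum (v @ L)"
    using L by simp
  then have "fsum (fmap (case_prod t) u) = fsum (fmap (case_prod t) (v @ L))"
    by (rule fsum_fmap_cong)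
  with L show ?thesis
    by simp
qed

lemma span_rel3_generators:
  fixes s :: "'k::field \<Rightarrow> 'a::ab_group_add \<Rightarrow> 'a"
  shows "fsum [(1::'k, (x + x', y, z)), (-1, (x, y, z)), (-1, (x', y, z))] \<in> span_rel3 s"
    and "fsum [(1::'k, (x, y + y', z)), (-1, (x, y, z)), (-1, (x, y', z))] \<in> span_rel3 s"
    and "fsum [(1::'k, (x, y, z + z')), (-1, (x, y, z)), (-1, (x, y, z'))] \<in> span_rel3 s"
    and "fsum [(1::'k, (s c x, y, z)), (-c, (x, y, z))] \<in> span_rel3 s"
    and "fsum [(1::'k, (x, s c y, z)), (-c, (x, y, z))] \<in> span_rel3 s"
    and "fsum [(1::'k, (x, y, s c z)), (-c, (x, y, z))] \<in> span_rel3 s"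
  by (rule span_fscale_base, unfold rel3_def Un_iff, (intro disjI1 disjI2)?, blast)+

lemma tens3_bilinear_left:
  assumes "Vector_Spaces.linear s s f" and "Vector_Spaces.linear s s g"
  shows "tens3_bilinear s (\<lambda>x y. (f x, g y, z))"
  using assms unfolding tens3_bilinear_def linear_iff
  by (simp add: span_rel3_generators)

lemma tens3_bilinear_right:
  assumes "Vector_Spaces.linear s s f" and "Vector_Spaces.linear s s g"
  shows "tens3_bilinear s (\<lambda>x y. (z, f x, g y))"
  using assms unfolding tens3_bilinear_def linear_iff
  by (simp add: span_rel3_generators)

definition dsum :: "('a \<times> 'a) list \<Rightarrow> ('a \<times> 'a) list \<Rightarrow> ('a \<Rightarrow> 'a \<Rightarrow> 'a \<Rightarrow> 'a \<Rightarrow> 'b) \<Rightarrow> ('b \<Rightarrow> 'k::comm_ring_1)" where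
  "dsum r1 r2 T = sum_list (map (\<lambda>(xi,yi). fsum (map (\<lambda>(xj,yj). (1, T xi yi xj yj)) r2)) r1)"

lemma fsum_map_eq_sum_list: "fsum (map g xs) = sum_list (map (\<lambda>x. fsum [g x]) xs)"
proof (induction xs)
  case (Cons a xs)
  then show ?case by (cases "g a") (simp add: fsum_Cons)
qed simp

lemma sum_list_map_swap:
  "sum_list (map (\<lambda>x. sum_list (map (F x) ys)) xs)
   = (sum_list (map (\<lambda>y. sum_list (map (\<lambda>x. F x y) xs)) ys) :: 'b::comm_monoid_add)"
  by (induction xs) (simp_all add: sum_list_addf)

lemma dsum_swap: "dsum r1 r2 T = dsum r2 r1 (\<lambda>xi yi xj yj. T xj yj xi yi)"
  unfolding dsum_def
  by (subst (1 2) fsum_map_eq_sum_list) (simp add: split_def, rule sum_list_map_swap)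

lemma dsum_subst_right:
  assumes invariant: "tens2_eq s (tens_of (map (\<lambda>(x,y). (f x, f y)) r)) (tens_of r :: ('k::field \<times> 'a::ab_group_add \<times> 'a) list)"
    and bilinear: "\<And>xi yi. tens3_bilinear s (T xi yi)"
    and substituted: "\<And>xi yi xj yj. T xi yi (f xj) (f yj) = T' xi yi xj yj"
  shows "dsum r1 r T' - (dsum r1 r T :: _ \<Rightarrow> 'k) \<in> span_rel3 s"
proof (induction r1)
  case Nil
  then show ?case
    by (simp add: dsum_def span_fscale_zero flip: zero_fun_def)
next
  case (Cons p r1)
  obtain xi yi where p: "p = (xi,yi)" by fastforce
  let ?row = "\<lambda>T. fsum (map (\<lambda>(xj,yj). (1::'k, T xi yi xj yj)) r)"
  have "?row T' - ?row T \<in> span_rel3 s"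
    using tens2_eq_fmap[OF invariant bilinear[of xi yi]]
    by (simp add: fmap_def tens_of_def split_def o_def substituted)
  moreover have "dsum (p # r1) r T' - dsum (p # r1) r T
      = (?row T' - ?row T) + (dsum r1 r T' - (dsum r1 r T :: _ \<Rightarrow> 'k))"
    by (simp add: dsum_def p fun_eq_iff)
  ultimately show ?case
    using Cons.IH by (metis span_fscale_add)
qed

lemma dsum_subst_left:
  assumes "tens2_eq s (tens_of (map (\<lambda>(x,y). (f x, f y)) r)) (tens_of r :: ('k::field \<times> 'a::ab_group_add \<times> 'a) list)"
    and "\<And>xj yj. tens3_bilinear s (\<lambda>xi yi. T xi yi xj yj)"
    and "\<And>xi yi xj yj. T (f xi) (f yi) xj yj = T' xi yi xj yj"
  shows "dsum r r2 T' - (dsum r r2 T :: _ \<Rightarrow> 'k) \<in> span_rel3 s"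
  using dsum_subst_right[where T="\<lambda>xi yi xj yj. T xj yj xi yi", OF assms]
  by (subst (1 2) dsum_swap) simp

lemma sum_list_map_uminus: "sum_list (map (\<lambda>x. - f x) xs) = - (sum_list (map f xs) :: 'b::ab_group_add)"
  by (induction xs) simp_all

lemmas fsum_dsum_simps =
  fsum_concat map_concat o_def split_def fsum_map_uminus sum_list_addf sum_list_subtractf
  sum_list_map_uminus fun_eq_iff

text \<open>The first and third terms are written with \<open>i\<close> and \<open>j\<close> exchanged, to match terms of
  the other side.\<close>

lemma fsum_Delta_beta:
  "(fsum (Delta_beta mu \<alpha> \<beta> r a) :: _ \<Rightarrow> 'k::field) =
     dsum r r (\<lambda>xi yi xj yj. (\<alpha> xi, mu yi (\<alpha> xj), \<beta> (mu yj a)))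
   - dsum r r (\<lambda>xi yi xj yj. (mu (\<alpha> xi) xj, \<beta> yj, \<beta> (mu yi a)))
   - dsum r r (\<lambda>xi yi xj yj. (\<alpha> xi, mu yi (mu a xj), \<beta> (\<beta> yj)))
   + dsum r r (\<lambda>xi yi xj yj. (mu (mu a xi) xj, \<beta> yj, \<beta> (\<beta> yi)))"
  unfolding dsum_swap[of r r "\<lambda>xi yi xj yj. (\<alpha> xi, mu yi (\<alpha> xj), \<beta> (mu yj a))"]
    dsum_swap[of r r "\<lambda>xi yi xj yj. (\<alpha> xi, mu yi (mu a xj), \<beta> (\<beta> yj))"]
  unfolding Delta_beta_def Delta_r_def dsum_def
  by (simp add: fsum_dsum_simps)

lemma fsum_alpha_Delta:
  "(fsum (alpha_Delta mu \<alpha> \<beta> r a) :: _ \<Rightarrow> 'k::field) =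
     dsum r r (\<lambda>xi yi xj yj. (\<alpha> (\<alpha> xi), \<alpha> xj, mu yj (mu yi a)))
   - dsum r r (\<lambda>xi yi xj yj. (\<alpha> (\<alpha> xi), mu (mu yi a) xj, \<beta> yj))
   - dsum r r (\<lambda>xi yi xj yj. (\<alpha> (mu a xi), \<alpha> xj, mu yj (\<beta> yi)))
   + dsum r r (\<lambda>xi yi xj yj. (\<alpha> (mu a xi), mu (\<beta> yi) xj, \<beta> yj))"
  unfolding alpha_Delta_def Delta_r_def dsum_def
  by (simp add: fsum_dsum_simps)

lemma fsum_lact_AYBE:
  "(fsum (lact mu \<alpha> \<beta> a (AYBE mu \<alpha> \<beta> r)) :: _ \<Rightarrow> 'k::field) =
     dsum r r (\<lambda>xi yi xj yj. (mu (\<alpha> a) (mu xi xj), \<beta> (\<beta> yj), \<beta> (\<beta> yi)))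
   - dsum r r (\<lambda>xi yi xj yj. (mu (\<alpha> a) (\<alpha> xi), \<beta> (mu yi xj), \<beta> (\<beta> yj)))
   + dsum r r (\<lambda>xi yi xj yj. (mu (\<alpha> a) (\<alpha> xi), \<beta> (\<alpha> xj), \<beta> (mu yj yi)))"
  unfolding lact_def AYBE_def dsum_def
  by (simp add: fsum_dsum_simps)

lemma fsum_ract_AYBE:
  "(fsum (ract mu \<alpha> \<beta> (AYBE mu \<alpha> \<beta> r) a) :: _ \<Rightarrow> 'k::field) =
     dsum r r (\<lambda>xi yi xj yj. (\<alpha> (mu xi xj), \<alpha> (\<beta> yj), mu (\<beta> yi) (\<beta> a)))
   - dsum r r (\<lambda>xi yi xj yj. (\<alpha> (\<alpha> xi), \<alpha> (mu yi xj), mu (\<beta> yj) (\<beta> a)))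
   + dsum r r (\<lambda>xi yi xj yj. (\<alpha> (\<alpha> xi), \<alpha> (\<alpha> xj), mu (mu yj yi) (\<beta> a)))"
  unfolding ract_def AYBE_def dsum_def
  by (simp add: fsum_dsum_simps)

context
  fixes smul :: "'k::field \<Rightarrow> 'a::ab_group_add \<Rightarrow> 'a"
    and mu :: "'a \<Rightarrow> 'a \<Rightarrow> 'a" and \<alpha> \<beta> :: "'a \<Rightarrow> 'a"
  assumes bihom: "bihom_assoc smul mu \<alpha> \<beta>"
begin

lemma bihom_linear:
  shows "Vector_Spaces.linear smul smul (mu x)"
    and "Vector_Spaces.linear smul smul (\<lambda>x. mu x y)"
    and "Vector_Spaces.linear smul smul \<alpha>"
    and "Vector_Spaces.linear smul smul \<beta>"
  using bihom unfolding bihom_assoc_def by blast+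

lemma bihom_identities:
  shows alpha_mu: "\<alpha> (mu x y) = mu (\<alpha> x) (\<alpha> y)"
    and beta_mu: "\<beta> (mu x y) = mu (\<beta> x) (\<beta> y)"
    and alpha_beta: "\<alpha> (\<beta> x) = \<beta> (\<alpha> x)"
    and bihom_assoc: "mu (\<alpha> x) (mu y z) = mu (mu x y) (\<beta> z)"
  using bihom unfolding bihom_assoc_def by (auto simp: fun_eq_iff)

lemma coassoc_defect_eq_AYBE_defect:
  assumes inv_\<alpha>: "tens2_eq smul (tens_of (map (\<lambda>(x,y). (\<alpha> x, \<alpha> y)) r)) (tens_of r :: ('k \<times> 'a \<times> 'a) list)"
    and inv_\<beta>: "tens2_eq smul (tens_of (map (\<lambda>(x,y). (\<beta> x, \<beta> y)) r)) (tens_of r :: ('k \<times> 'a \<times> 'a) list)"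
  shows "(fsum (Delta_beta mu \<alpha> \<beta> r a) - fsum (alpha_Delta mu \<alpha> \<beta> r a))
      - (fsum (lact mu \<alpha> \<beta> a (AYBE mu \<alpha> \<beta> r)) - fsum (ract mu \<alpha> \<beta> (AYBE mu \<alpha> \<beta> r) a) :: _ \<Rightarrow> 'k)
      \<in> span_rel3 smul" (is "?defect \<in> _")
proof -
  txt \<open>\<open>D\<^sub>k\<close>, \<open>A\<^sub>k\<close>, \<open>L\<^sub>k\<close>, \<open>R\<^sub>k\<close> are the \<open>k\<close>-th terms of the normal forms of
    \<open>Delta_beta\<close>, \<open>alpha_Delta\<close>, \<open>lact\<close> and \<open>ract\<close>; \<open>D\<^sub>3\<close> and \<open>A\<^sub>2\<close> are
    matched through the intermediate \<open>X\<close>.\<close>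
  note bilinear = tens3_bilinear_left tens3_bilinear_right bihom_linear
  let ?X = "dsum r r (\<lambda>xi yi xj yj. (\<alpha> (\<alpha> xi), mu (mu yi a) (\<beta> xj), \<beta> (\<beta> yj)))"
  have L1_D4: "dsum r r (\<lambda>xi yi xj yj. (mu (\<alpha> a) (mu xi xj), \<beta> (\<beta> yj), \<beta> (\<beta> yi)))
      - dsum r r (\<lambda>xi yi xj yj. (mu (mu a xi) xj, \<beta> yj, \<beta> (\<beta> yi))) \<in> span_rel3 smul"
      (is "?L1 - ?D4 \<in> _")
    by (rule dsum_subst_right[OF inv_\<beta>]) (auto intro: bilinear simp: bihom_assoc)
  have L2_A4: "dsum r r (\<lambda>xi yi xj yj. (mu (\<alpha> a) (\<alpha> xi), \<beta> (mu yi xj), \<beta> (\<beta> yj)))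
      - dsum r r (\<lambda>xi yi xj yj. (\<alpha> (mu a xi), mu (\<beta> yi) xj, \<beta> yj)) \<in> span_rel3 smul"
      (is "?L2 - ?A4 \<in> _")
    by (rule dsum_subst_right[OF inv_\<beta>]) (auto intro: bilinear simp: alpha_mu beta_mu)
  have L3_A3: "dsum r r (\<lambda>xi yi xj yj. (mu (\<alpha> a) (\<alpha> xi), \<beta> (\<alpha> xj), \<beta> (mu yj yi)))
      - dsum r r (\<lambda>xi yi xj yj. (\<alpha> (mu a xi), \<alpha> xj, mu yj (\<beta> yi))) \<in> span_rel3 smul"
      (is "?L3 - ?A3 \<in> _")
    by (rule dsum_subst_right[OF inv_\<beta>]) (auto intro: bilinear simp: alpha_mu beta_mu alpha_beta)
  have R1_D2: "dsum r r (\<lambda>xi yi xj yj. (\<alpha> (mu xi xj), \<alpha> (\<beta> yj), mu (\<beta> yi) (\<beta> a)))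
      - dsum r r (\<lambda>xi yi xj yj. (mu (\<alpha> xi) xj, \<beta> yj, \<beta> (mu yi a))) \<in> span_rel3 smul"
      (is "?R1 - ?D2 \<in> _")
    by (rule dsum_subst_right[OF inv_\<alpha>]) (auto intro: bilinear simp: alpha_mu beta_mu alpha_beta)
  have R2_D1: "dsum r r (\<lambda>xi yi xj yj. (\<alpha> (\<alpha> xi), \<alpha> (mu yi xj), mu (\<beta> yj) (\<beta> a)))
      - dsum r r (\<lambda>xi yi xj yj. (\<alpha> xi, mu yi (\<alpha> xj), \<beta> (mu yj a))) \<in> span_rel3 smul"
      (is "?R2 - ?D1 \<in> _")
    by (rule dsum_subst_left[OF inv_\<alpha>]) (auto intro: bilinear simp: alpha_mu beta_mu)
  have R3_A1: "dsum r r (\<lambda>xi yi xj yj. (\<alpha> (\<alpha> xi), \<alpha> (\<alpha> xj), mu (mu yj yi) (\<beta> a)))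
      - dsum r r (\<lambda>xi yi xj yj. (\<alpha> (\<alpha> xi), \<alpha> xj, mu yj (mu yi a))) \<in> span_rel3 smul"
      (is "?R3 - ?A1 \<in> _")
    by (rule dsum_subst_right[OF inv_\<alpha>]) (auto intro: bilinear simp: bihom_assoc)
  have X_A2: "?X - dsum r r (\<lambda>xi yi xj yj. (\<alpha> (\<alpha> xi), mu (mu yi a) xj, \<beta> yj)) \<in> span_rel3 smul"
      (is "_ - ?A2 \<in> _")
    by (rule dsum_subst_right[OF inv_\<beta>]) (auto intro: bilinear)
  have X_D3: "?X - dsum r r (\<lambda>xi yi xj yj. (\<alpha> xi, mu yi (mu a xj), \<beta> (\<beta> yj))) \<in> span_rel3 smul"
      (is "_ - ?D3 \<in> _")
    by (rule dsum_subst_left[OF inv_\<alpha>]) (auto intro: bilinear simp: bihom_assoc)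
  have "?defect = - (?R2 - ?D1) + (?R1 - ?D2) + (?X - ?D3) + - (?L1 - ?D4)
      + (?R3 - ?A1) + - (?X - ?A2) + - (?L3 - ?A3) + (?L2 - ?A4)"
    unfolding fsum_Delta_beta fsum_alpha_Delta fsum_lact_AYBE fsum_ract_AYBE
    by (simp add: algebra_simps)
  also have "\<dots> \<in> span_rel3 smul"
    using L1_D4 L2_A4 L3_A3 R1_D2 R2_D1 R3_A1 X_A2 X_D3
    by (intro span_fscale_add span_fscale_neg)
  finally show ?thesis .
qed

end

theorem proposition5p4:
  fixes smul :: "'k::field \<Rightarrow> 'a::ab_group_add \<Rightarrow> 'a"
    and mu :: "'a \<Rightarrow> 'a \<Rightarrow> 'a" and \<alpha> \<beta> :: "'a \<Rightarrow> 'a"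
    and r :: "('a \<times> 'a) list"
  assumes "bihom_assoc smul mu \<alpha> \<beta>"
    and "tens2_eq smul (tens_of (map (\<lambda>(x,y). (\<alpha> x, \<alpha> y)) r)) (tens_of r :: ('k \<times> 'a \<times> 'a) list)"
    and "tens2_eq smul (tens_of (map (\<lambda>(x,y). (\<beta> x, \<beta> y)) r)) (tens_of r :: ('k \<times> 'a \<times> 'a) list)"
  shows "(\<forall>a. tens3_eq smul (Delta_beta mu \<alpha> \<beta> r a) (alpha_Delta mu \<alpha> \<beta> r a))
     \<longleftrightarrow> (\<forall>a. tens3_eq smul (lact mu \<alpha> \<beta> a (AYBE mu \<alpha> \<beta> r)) (ract mu \<alpha> \<beta> (AYBE mu \<alpha> \<beta> r) a))"
proof -
  have "tens3_eq smul (Delta_beta mu \<alpha> \<beta> r a) (alpha_Delta mu \<alpha> \<beta> r a)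
      \<longleftrightarrow> tens3_eq smul (lact mu \<alpha> \<beta> a (AYBE mu \<alpha> \<beta> r)) (ract mu \<alpha> \<beta> (AYBE mu \<alpha> \<beta> r) a)" for a
    unfolding tens3_eq_def
    by (rule span_fscale_diff_mem_iff) (rule coassoc_defect_eq_AYBE_defect[OF assms])
  then show ?thesis
    by blast
qed

end
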